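(* For every integer $n\ge 2$ and every set $V$ of $n$ positive integers, there exists $v\in V$ such that $\kappa(V\setminus\{v\})\ge\frac1n$.
   Context: For $x\in\mathbb{R}$, $\|x\|=\min\{x-\lfloor x\rfloor,\lceil x\rceil-x\}$ denotes the distance from $x$ to the nearest integer. For a finite nonempty set $V$ of positive integers, $\kappa(V)=\sup_{t\in(0,1)}\min_{v\in V}\|tv\|$. *)

theory Defs
  imports Complex_Main
begin

definition dist_nearest_int :: "real \<Rightarrow> real" where
  "dist_nearest_int x = min (x - of_int \<lfloor>x\<rfloor>) (of_int \<lceil>x\<rceil> - x)"

definition kappa :: "nat set \<Rightarrow> real" where
  "kappa V = (SUP t\<in>{0<..<1::real}. Min ((\<lambda>v. dist_nearest_int (t * real v)) ` V))"

end

(* Let P be the product of the elements of V and M = n P. For w in V, the numerators j < M with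
   ||(j / M) w|| < 1/n are periodic modulo n P / w, with 2 P / w - 1 of them per period, so there
   are fewer than 2 P = 2 M / n of them. Summed over the n elements of V this is less than 2 M, hence
   some j < M is such a numerator for at most one v in V. As 0 is one for every element, j > 0, and
   t = j / M witnesses kappa (V - {v}) >= 1/n. *)
theory Submission
  imports Defs
begin

lemma dist_nearest_int_eq_frac: "dist_nearest_int x = min (frac x) (1 - frac x)"
  unfolding dist_nearest_int_def frac_def by (simp add: ceiling_altdef algebra_simps)

lemma dist_nearest_int_le_half: "dist_nearest_int x \<le> 1 / 2"
  unfolding dist_nearest_int_eq_frac by linarith

lemma frac_of_nat_divide:
  assumes "N > 0"
  shows "frac (real j / real N) = real (j mod N) / real N"
proof -
  have "real j = real (j mod N) + real N * real (j div N)"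
    by (metis mod_mult_div_eq of_nat_add of_nat_mult)
  then have "real j / real N - real (j mod N) / real N = of_int (int (j div N))"
    using assms by (simp add: field_simps)
  then show ?thesis
    using assms by (subst frac_unique_iff) (auto simp: divide_simps)
qed

lemma dist_nearest_int_of_nat_divide_less_iff:
  assumes "N > 0"
  shows "dist_nearest_int (real j / real N) < real q / real N
    \<longleftrightarrow> j mod N < q \<or> N < j mod N + q"
proof -
  have "dist_nearest_int (real j / real N) < real q / real N
    \<longleftrightarrow> real (j mod N) / real N < real q / real N \<or> 1 - real (j mod N) / real N < real q / real N"
    using assms by (simp add: dist_nearest_int_eq_frac frac_of_nat_divide min_less_iff_disj)
  also have "\<dots> \<longleftrightarrow> j mod N < q \<or> N < j mod N + q"
    using assms by (simp add: divide_simps) linarith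
  finally show ?thesis .
qed

lemma card_mod_in_less_mult:
  fixes N k :: nat
  assumes "N > 0"
  shows "card {j. j < k * N \<and> j mod N \<in> S} = k * card (S \<inter> {..<N})"
proof -
  have "bij_betw (\<lambda>j. (j div N, j mod N)) {j. j < k * N \<and> j mod N \<in> S} ({..<k} \<times> (S \<inter> {..<N}))"
  proof (rule bij_betw_byWitness[where f' = "\<lambda>(q, r). q * N + r"])
    show "(\<lambda>(q, r). q * N + r) ` ({..<k} \<times> (S \<inter> {..<N})) \<subseteq> {j. j < k * N \<and> j mod N \<in> S}"
    proof clarsimp
      fix q r assume "q < k" "r \<in> S" "r < N"
      then have "q * N + r < Suc q * N" by simp
      also have "\<dots> \<le> k * N" using \<open>q < k\<close> by (intro mult_right_mono) auto
      finally show "q * N + r < k * N" .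
    qed
  qed (use assms in \<open>auto simp: less_mult_imp_div_less\<close>)
  then show ?thesis by (simp add: bij_betw_same_card card_cartesian_product)
qed

lemma card_residues_near_zero:
  fixes N q :: nat
  assumes "0 < q" "2 * q \<le> N"
  shows "card ({r. r < q \<or> N < r + q} \<inter> {..<N}) = 2 * q - 1"
proof -
  have "{r. r < q \<or> N < r + q} \<inter> {..<N} = {..<q} \<union> {N - q<..<N}"
    using assms by auto
  moreover have "card ({..<q} \<union> {N - q<..<N}) = q + (q - 1)"
    using assms by (subst card_Un_disjoint) auto
  ultimately show ?thesis using assms by simp
qed

lemma card_dist_nearest_int_of_nat_divide_less:
  fixes k N q :: nat
  assumes "0 < q" "2 * q \<le> N"
  shows "card {j. j < k * N \<and> dist_nearest_int (real j / real N) < real q / real N} = k * (2 * q - 1)"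
proof -
  have "N > 0" using assms by simp
  then have "card {j. j < k * N \<and> dist_nearest_int (real j / real N) < real q / real N}
      = card {j. j < k * N \<and> j mod N \<in> {r. r < q \<or> N < r + q}}"
    by (simp add: dist_nearest_int_of_nat_divide_less_iff)
  also have "\<dots> = k * card ({r. r < q \<or> N < r + q} \<inter> {..<N})"
    by (rule card_mod_in_less_mult[OF \<open>N > 0\<close>])
  also have "\<dots> = k * (2 * q - 1)"
    by (simp only: card_residues_near_zero[OF assms])
  finally show ?thesis .
qed

lemma card_dist_nearest_int_dilation_less:
  fixes M n w :: nat
  assumes "0 < w" "2 \<le> n" "0 < M" "w * n dvd M"
  shows "n * card {j. j < M \<and> dist_nearest_int (real j / real M * real w) < 1 / real n} < 2 * M"
proof -
  obtain q where M: "M = w * (n * q)"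
    using assms(4) unfolding mult.assoc[symmetric] by (rule dvdE)
  with assms have "0 < q" "2 * q \<le> n * q"
    by simp_all
  have "{j. j < M \<and> dist_nearest_int (real j / real M * real w) < 1 / real n}
      = {j. j < w * (n * q) \<and> dist_nearest_int (real j / real (n * q)) < real q / real (n * q)}"
    using assms \<open>0 < q\<close> unfolding M by simp
  then have "n * card {j. j < M \<and> dist_nearest_int (real j / real M * real w) < 1 / real n}
      = n * (w * (2 * q - 1))"
    using card_dist_nearest_int_of_nat_divide_less[OF \<open>0 < q\<close> \<open>2 * q \<le> n * q\<close>] by simp
  also have "\<dots> < 2 * M"
    using assms \<open>0 < q\<close> unfolding M by simp
  finally show ?thesis .
qed

lemma exists_point_covered_at_most_once:
  fixes A :: "'a \<Rightarrow> 'b set"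
  assumes "finite V" "finite X" "\<forall>v\<in>V. A v \<subseteq> X"
    and "(\<Sum>v\<in>V. card (A v)) < 2 * card X"
  shows "\<exists>x\<in>X. card {v \<in> V. x \<in> A v} \<le> 1"
proof (rule ccontr)
  assume "\<not> ?thesis"
  then have "(\<Sum>x\<in>X. 2) \<le> (\<Sum>x\<in>X. card {v \<in> V. x \<in> A v})"
    by (intro sum_mono) auto
  also have "\<dots> = (\<Sum>v\<in>V. card {x \<in> X. x \<in> A v})"
    using assms(1,2) by (intro sum_multicount_gen) auto
  also have "\<dots> = (\<Sum>v\<in>V. card (A v))"
    using assms(3) by (intro sum.cong refl arg_cong[where f = card]) blast
  finally show False
    using assms(4) by simp
qed

lemma exists_point_outside_all_but_one:
  fixes A :: "'a \<Rightarrow> 'b set"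
  assumes "finite V" "V \<noteq> {}" "finite X" "\<forall>v\<in>V. A v \<subseteq> X"
    and "\<forall>v\<in>V. card V * card (A v) < 2 * card X"
  shows "\<exists>x\<in>X. \<exists>v\<^sub>0\<in>V. \<forall>w\<in>V - {v\<^sub>0}. x \<notin> A w"
proof -
  have "card V * (\<Sum>v\<in>V. card (A v)) = (\<Sum>v\<in>V. card V * card (A v))"
    by (simp add: sum_distrib_left)
  also have "\<dots> < (\<Sum>v\<in>V. 2 * card X)"
    using assms(1,2,5) by (intro sum_strict_mono) auto
  also have "\<dots> = card V * (2 * card X)"
    by simp
  finally have "(\<Sum>v\<in>V. card (A v)) < 2 * card X"
    by simp
  then obtain x where "x \<in> X" and "card {v \<in> V. x \<in> A v} \<le> 1"
    using exists_point_covered_at_most_once[OF assms(1,3,4)] by blast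
  then have "\<forall>v\<in>V. \<forall>v'\<in>V. x \<in> A v \<longrightarrow> x \<in> A v' \<longrightarrow> v = v'"
    using card_le_Suc0_iff_eq[of "{v \<in> V. x \<in> A v}"] assms(1) by auto
  then show ?thesis
    using \<open>x \<in> X\<close> assms(2) by blast
qed

lemma kappa_geI:
  assumes "finite W" "W \<noteq> {}" "0 < t" "t < 1" "\<forall>w\<in>W. c \<le> dist_nearest_int (t * real w)"
  shows "c \<le> kappa W"
proof -
  have "c \<le> Min ((\<lambda>w. dist_nearest_int (t * real w)) ` W)"
    using assms by simp
  also have "\<dots> \<le> kappa W"
    unfolding kappa_def
  proof (rule cSUP_upper)
    obtain w where "w \<in> W" using assms(2) by blast
    have "Min ((\<lambda>w. dist_nearest_int (s * real w)) ` W) \<le> 1 / 2" for s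
      using Min_le[OF finite_imageI[OF assms(1)] imageI[OF \<open>w \<in> W\<close>]] dist_nearest_int_le_half
      by (rule order_trans)
    then show "bdd_above ((\<lambda>s. Min ((\<lambda>w. dist_nearest_int (s * real w)) ` W)) ` {0<..<1})"
      by (intro bdd_aboveI2)
  qed (use assms in auto)
  finally show ?thesis .
qed

theorem mainTheorem7:
  fixes n :: nat and V :: "nat set"
  assumes "n \<ge> 2" and "finite V" and "card V = n" and "\<forall>v\<in>V. v > 0"
  shows "\<exists>v\<in>V. kappa (V - {v}) \<ge> 1 / real n"
proof -
  define M where "M = n * \<Prod>V"
  define A where "A w = {j. j < M \<and> dist_nearest_int (real j / real M * real w) < 1 / real n}" for w
  have "M > 0"
    using assms(1,2,4) by (simp add: M_def prod_pos)
  have "w * n dvd M" if "w \<in> V" for w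
    using dvd_prodI[OF assms(2) that, of id] unfolding M_def by (simp add: mult.commute mult_dvd_mono)
  then have "\<forall>w\<in>V. card V * card (A w) < 2 * card {..<M}"
    unfolding A_def using assms \<open>M > 0\<close> card_dist_nearest_int_dilation_less by simp
  moreover have "V \<noteq> {}" "\<forall>w\<in>V. A w \<subseteq> {..<M}"
    using assms(1-3) by (auto simp: A_def)
  ultimately obtain j v\<^sub>0 where "j < M" "v\<^sub>0 \<in> V" and good: "\<forall>w\<in>V - {v\<^sub>0}. j \<notin> A w"
    using exists_point_outside_all_but_one[OF assms(2) _ finite_lessThan] by blast
  have "V - {v\<^sub>0} \<noteq> {}"
    using assms(1,3) card_Diff_singleton[OF \<open>v\<^sub>0 \<in> V\<close>] by fastforce
  moreover have "0 \<in> A w" for w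
    using \<open>M > 0\<close> assms(1) by (simp add: A_def dist_nearest_int_def)
  ultimately have "j \<noteq> 0"
    using good by (metis all_not_in_conv)
  then have "0 < real j / real M" "real j / real M < 1"
    using \<open>j < M\<close> by simp_all
  moreover have "\<forall>w\<in>V - {v\<^sub>0}. 1 / real n \<le> dist_nearest_int (real j / real M * real w)"
    using good \<open>j < M\<close> by (auto simp: A_def not_less)
  ultimately have "1 / real n \<le> kappa (V - {v\<^sub>0})"
    by (rule kappa_geI[OF finite_Diff[OF assms(2)] \<open>V - {v\<^sub>0} \<noteq> {}\<close>])
  then show ?thesis
    using \<open>v\<^sub>0 \<in> V\<close> by blast
qed

end
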